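(* Let $C\subseteq\omega$ be noncomputable and let $A\subseteq\omega$ be an infinite set whose complement $\omega\setminus A$ is hyperimmune. Then there is an infinite subset $G\subseteq A$ which does not compute $C$. *)

theory Defs
  imports Main "HOL-Library.Infinite_Set"
begin

datatype recf = Zero | Succ | Proj nat | Comp recf "recf list" | Prim recf recf | Mn recf | Orc

inductive eval :: "nat set \<Rightarrow> recf \<Rightarrow> nat list \<Rightarrow> nat \<Rightarrow> bool"
  for X :: "nat set" where
  zero: "eval X Zero xs 0"
| succ: "eval X Succ [x] (Suc x)"
| proj: "i < length xs \<Longrightarrow> eval X (Proj i) xs (xs ! i)"
| orc: "eval X Orc [x] (if x \<in> X then 1 else 0)"
| comp: "list_all2 (\<lambda>g y. eval X g xs y) gs ys \<Longrightarrow> eval X f ys z \<Longrightarrow> eval X (Comp f gs) xs z"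
| prim0: "eval X f xs z \<Longrightarrow> eval X (Prim f g) (0 # xs) z"
| primS: "eval X (Prim f g) (n # xs) r \<Longrightarrow> eval X g (n # r # xs) z
          \<Longrightarrow> eval X (Prim f g) (Suc n # xs) z"
| mn: "eval X f (n # xs) 0 \<Longrightarrow> (\<forall>m<n. \<exists>y. eval X f (m # xs) y \<and> y \<noteq> 0)
          \<Longrightarrow> eval X (Mn f) xs n"
monos list.rel_mono

definition rel_computable :: "nat set \<Rightarrow> (nat \<Rightarrow> nat) \<Rightarrow> bool" where
  "rel_computable X f \<longleftrightarrow> (\<exists>p. \<forall>x. eval X p [x] (f x))"

definition computable_fun :: "(nat \<Rightarrow> nat) \<Rightarrow> bool" where
  "computable_fun f \<longleftrightarrow> rel_computable {} f"

definition turing_reducible :: "nat set \<Rightarrow> nat set \<Rightarrow> bool" where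
  "turing_reducible C G \<longleftrightarrow> rel_computable G (\<lambda>x. if x \<in> C then 1 else 0)"

definition computable_set :: "nat set \<Rightarrow> bool" where
  "computable_set C \<longleftrightarrow> turing_reducible C {}"

definition hyperimmune :: "nat set \<Rightarrow> bool" where
  "hyperimmune B \<longleftrightarrow> infinite B \<and>
     \<not> (\<exists>f. computable_fun f \<and> (\<forall>n. enumerate B n \<le> f n))"

end

(*
  G is built by finite extension. A condition is a finite sigma inside A with a bound u, and
  G extends it if G and sigma agree below u. For each oracle program p the condition is
  extended so that p^G differs from C for every G inside A extending it.

  If some finite extension D of sigma inside A makes p answer wrongly, the finite use of
  that computation lets us keep D. Otherwise all convergent finite extensions inside A
  answer correctly, and hyperimmunity of the complement of A gives a bound b above which any
  two finite extensions of sigma, inside A or not, give the same answers: otherwise searching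
  for disagreeing pairs above b would be a computable function h such that every interval
  [b, h b) contains an element outside A (one of the two extensions must leave A), and
  iterating h would dominate the enumeration of the complement. If then every x had a
  convergent extension inside A, searching for any convergent finite extension would
  compute C; so some x has none, and raising the bound to b forces p^G x to diverge.

  These searches range over finite oracles given by their codes; they are computable
  because the step-bounded interpreter is itself a total recursive function of the step
  bound, the code of the oracle and the arguments.
*)
theory Submission
  imports Defs "HOL-Library.Nat_Bijection" "HOL-Library.Countable"
begin

section \<open>Determinism and finite use of oracle computations\<close>

inductive_cases eval_CompE: "eval X (Comp f gs) xs y"

inductive_cases eval_PrimE: "eval X (Prim f g) xs y"

inductive_cases eval_MnE: "eval X (Mn f) xs y"

lemma list_all2_unique:
  "list_all2 (\<lambda>a b. P a b \<and> (\<forall>b'. P a b' \<longrightarrow> b = b')) as bs \<Longrightarrow> list_all2 P as bs' \<Longrightarrow> bs = bs'"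
proof (induction arbitrary: bs' rule: list_all2_induct)
  case (Cons a as b bs)
  then show ?case by (auto simp: list_all2_Cons1)
qed simp

lemma eval_deterministic: "eval X p xs y \<Longrightarrow> eval X p xs y' \<Longrightarrow> y = y'"
proof (induction arbitrary: y' rule: eval.induct)
  case (comp xs gs ys f z)
  from comp.prems obtain ys' where ys': "list_all2 (\<lambda>g y. eval X g xs y) gs ys'"
    and f: "eval X f ys' y'"
    by (rule eval_CompE)
  from list_all2_unique[OF comp.IH(1) ys'] comp.IH(2) f show ?case by blast
next
  case (prim0 f xs z g)
  from prim0.prems show ?case by (rule eval_PrimE) (simp_all add: prim0.IH)
next
  case (primS f g n xs r z)
  from primS.prems obtain r' where "eval X (Prim f g) (n # xs) r'" "eval X g (n # r' # xs) y'"
    by (rule eval_PrimE) simp_all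
  with primS.IH show ?case by blast
next
  case (mn f n xs)
  from mn.prems have zero: "eval X f (y' # xs) 0"
    and nonzero: "\<forall>m<y'. \<exists>y. eval X f (m # xs) y \<and> y \<noteq> 0"
    by (auto elim: eval_MnE)
  show ?case
  proof (rule linorder_cases)
    assume "n < y'"
    then obtain y where "eval X f (n # xs) y" "y \<noteq> 0" using nonzero by blast
    with mn.IH(1) show ?thesis by blast
  next
    assume "y' < n"
    then obtain y where "eval X f (y' # xs) y" "\<forall>y''. eval X f (y' # xs) y'' \<longrightarrow> y = y''" "y \<noteq> 0"
      using mn.IH(2) by blast
    with zero show ?thesis by blast
  qed
qed (auto elim: eval.cases)

lemma eventually_list_all2:
  assumes "list_all2 (\<lambda>a b. \<forall>\<^sub>F x in F. P a b x) as bs"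
  shows "\<forall>\<^sub>F x in F. list_all2 (\<lambda>a b. P a b x) as bs"
  using assms
proof (induction rule: list_all2_induct)
  case (Cons a as b bs)
  from Cons.hyps(1) Cons.IH show ?case by eventually_elim simp
qed simp

lemma eval_finite_use:
  "eval X p xs y \<Longrightarrow> \<forall>\<^sub>F w in sequentially. \<forall>Y. Y \<inter> {..<w} = X \<inter> {..<w} \<longrightarrow> eval Y p xs y"
proof (induction rule: eval.induct)
  case (orc x)
  have "\<forall>\<^sub>F w in sequentially. x < w" by simp
  then show ?case by eventually_elim (metis Int_iff lessThan_iff eval.orc)
next
  case (comp xs gs ys f z)
  have "\<forall>\<^sub>F w in sequentially. list_all2 (\<lambda>g y. \<forall>Y. Y \<inter> {..<w} = X \<inter> {..<w} \<longrightarrow> eval Y g xs y) gs ys"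
    by (rule eventually_list_all2) (use comp.IH(1) in \<open>auto elim: list_all2_mono\<close>)
  with comp.IH(2) show ?case
  proof eventually_elim
    case (elim w)
    then show ?case by (blast intro: eval.comp list_all2_mono[OF elim(2)])
  qed
next
  case (primS f g n xs r z)
  from primS.IH show ?case by eventually_elim (blast intro: eval.primS)
next
  case (mn f n xs)
  have "\<forall>\<^sub>F w in sequentially. \<forall>m\<in>{..<n}.
      \<forall>Y. Y \<inter> {..<w} = X \<inter> {..<w} \<longrightarrow> (\<exists>y. eval Y f (m # xs) y \<and> y \<noteq> 0)"
  proof (intro eventually_ball_finite ballI)
    fix m assume "m \<in> {..<n}"
    then obtain y where "y \<noteq> 0"
      and ev: "\<forall>\<^sub>F w in sequentially. \<forall>Y. Y \<inter> {..<w} = X \<inter> {..<w} \<longrightarrow> eval Y f (m # xs) y"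
      using mn.IH(2) by auto
    show "\<forall>\<^sub>F w in sequentially.
        \<forall>Y. Y \<inter> {..<w} = X \<inter> {..<w} \<longrightarrow> (\<exists>y. eval Y f (m # xs) y \<and> y \<noteq> 0)"
      by (rule eventually_mono[OF ev]) (use \<open>y \<noteq> 0\<close> in blast)
  qed simp
  with mn.IH(1) show ?case
    by eventually_elim (simp add: eval.mn)
next
  case (prim0 f xs z g)
  from prim0.IH show ?case by eventually_elim (blast intro: eval.prim0)
qed (simp_all add: eval.intros)

lemma eval_restrict_finite:
  "eval X p xs y \<Longrightarrow> \<forall>\<^sub>F w in sequentially. eval (X \<inter> {..<w}) p xs y"
  by (drule eval_finite_use) (rule eventually_mono, assumption, simp)

section \<open>Clocked evaluation\<close>

text \<open>Values are shifted by one: \<open>clocked_eval p s X xs = 0\<close> means that no value is found within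
  the step bound \<open>s\<close>, and \<open>Suc y\<close> means value \<open>y\<close>. The state of \<open>mu_search F s\<close> after scanning
  \<open>n < s\<close> is 0 while searching, 1 once some \<open>F n\<close> has no value, and \<open>t + 2\<close> once \<open>F t\<close> has
  value 0.\<close>

fun mu_search :: "(nat \<Rightarrow> nat) \<Rightarrow> nat \<Rightarrow> nat" where
  "mu_search F 0 = 0"
| "mu_search F (Suc t) =
    (if mu_search F t \<noteq> 0 then mu_search F t
     else if F t = 0 then 1 else if F t = 1 then t + 2 else 0)"

primrec clocked_eval :: "recf \<Rightarrow> nat \<Rightarrow> nat set \<Rightarrow> nat list \<Rightarrow> nat" where
  "clocked_eval Zero s X xs = 1"
| "clocked_eval Succ s X xs = (case xs of [x] \<Rightarrow> x + 2 | _ \<Rightarrow> 0)"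
| "clocked_eval (Proj i) s X xs = (if i < length xs then Suc (xs ! i) else 0)"
| "clocked_eval Orc s X xs = (case xs of [x] \<Rightarrow> if x \<in> X then 2 else 1 | _ \<Rightarrow> 0)"
| "clocked_eval (Comp f gs) s X xs =
    (let rs = map (\<lambda>g. clocked_eval g s X xs) gs
     in if 0 \<in> set rs then 0 else clocked_eval f s X (map (\<lambda>r. r - 1) rs))"
| "clocked_eval (Prim f g) s X xs =
    (case xs of [] \<Rightarrow> 0
     | n # ys \<Rightarrow> rec_nat (clocked_eval f s X ys)
                  (\<lambda>m r. if r = 0 then 0 else clocked_eval g s X (m # (r - 1) # ys)) n)"
| "clocked_eval (Mn f) s X xs = mu_search (\<lambda>n. clocked_eval f s X (n # xs)) s - 1"

lemma mu_search_found:
  "mu_search F s = Suc (Suc t) \<Longrightarrow> t < s \<and> F t = 1 \<and> (\<forall>m<t. F m \<ge> 2)"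
proof (induction s)
  case (Suc s)
  have searching: "\<forall>m<s. F m \<ge> 2" if "mu_search F s = 0" for s
    using that by (induction s) (auto split: if_splits simp: less_Suc_eq)
  show ?case
    using Suc searching[of s] by (auto split: if_splits)
qed simp

lemma mu_search_finds:
  assumes "\<forall>m<t. F m \<ge> 2" "F t = 1" "t < s"
  shows "mu_search F s = Suc (Suc t)"
  using assms(3)
proof (induction s)
  case (Suc s)
  have "mu_search F t = 0"
    using assms(1) by (induction t) auto
  with Suc assms(2) show ?case by (auto simp: less_Suc_eq)
qed simp

lemma mu_search_eq_rec_nat:
  "mu_search F s = rec_nat 0
     (\<lambda>t r. if r \<noteq> 0 then r else if F t = 0 then 1 else if F t = 1 then t + 2 else 0) s"
  by (induction s) simp_all

lemma eval_Prim_if_clocked: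
  assumes f: "\<And>y. clocked_eval f s X ys = Suc y \<Longrightarrow> eval X f ys y"
    and g: "\<And>zs y. clocked_eval g s X zs = Suc y \<Longrightarrow> eval X g zs y"
  shows "rec_nat (clocked_eval f s X ys)
      (\<lambda>m r. if r = 0 then 0 else clocked_eval g s X (m # (r - 1) # ys)) n = Suc y \<Longrightarrow>
    eval X (Prim f g) (n # ys) y"
proof (induction n arbitrary: y)
  case 0
  then show ?case by (simp add: f eval.prim0)
next
  case (Suc n)
  let ?r = "rec_nat (clocked_eval f s X ys)
      (\<lambda>m r. if r = 0 then 0 else clocked_eval g s X (m # (r - 1) # ys)) n"
  from Suc.prems have r: "?r = Suc (?r - 1)" and "clocked_eval g s X (n # (?r - 1) # ys) = Suc y"
    by (simp_all split: if_splits)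
  then have "eval X g (n # (?r - 1) # ys) y" by (intro g)
  moreover have "eval X (Prim f g) (n # ys) (?r - 1)" using Suc.IH r by simp
  ultimately show ?case by (rule eval.primS[rotated])
qed

lemma eval_Mn_if_clocked:
  assumes f: "\<And>zs y. clocked_eval f s X zs = Suc y \<Longrightarrow> eval X f zs y"
    and "mu_search (\<lambda>n. clocked_eval f s X (n # xs)) s = Suc (Suc y)"
  shows "eval X (Mn f) xs y"
proof (rule eval.mn)
  let ?F = "\<lambda>n. clocked_eval f s X (n # xs)"
  from assms(2) have found: "?F y = Suc 0" and before: "\<And>m. m < y \<Longrightarrow> ?F m \<ge> 2"
    by (auto dest: mu_search_found)
  from found show "eval X f (y # xs) 0" by (rule f)
  show "\<forall>m<y. \<exists>z. eval X f (m # xs) z \<and> z \<noteq> 0"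
  proof (intro allI impI)
    fix m assume "m < y"
    then have "?F m = Suc (?F m - 1)" and "?F m - 1 \<noteq> 0" using before[of m] by auto
    then show "\<exists>z. eval X f (m # xs) z \<and> z \<noteq> 0" using f by blast
  qed
qed

lemma clocked_eval_sound: "clocked_eval p s X xs = Suc y \<Longrightarrow> eval X p xs y"
proof (induction p arbitrary: xs y)
  case Zero then show ?case by (auto intro: eval.zero)
next
  case Succ then show ?case by (auto split: list.splits intro: eval.succ)
next
  case (Proj i) then show ?case by (auto split: if_splits intro: eval.proj)
next
  case Orc
  then obtain x where "xs = [x]" "y = (if x \<in> X then 1 else 0)"
    by (auto split: list.splits if_splits)
  then show ?case by (simp add: eval.orc)
next
  case (Comp f gs)
  let ?rs = "map (\<lambda>g. clocked_eval g s X xs) gs"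
  have nz: "0 \<notin> set ?rs" and f: "clocked_eval f s X (map (\<lambda>r. r - 1) ?rs) = Suc y"
    using Comp.prems by (auto simp: Let_def split: if_splits)
  have "list_all2 (\<lambda>g y. eval X g xs y) gs (map (\<lambda>r. r - 1) ?rs)"
  proof (rule list_all2_all_nthI)
    fix i assume i: "i < length gs"
    have "?rs ! i \<noteq> 0" using nz nth_mem[of i ?rs] i by auto
    with i have "clocked_eval (gs ! i) s X xs = Suc (clocked_eval (gs ! i) s X xs - 1)"
      by simp
    with i show "eval X (gs ! i) xs (map (\<lambda>r. r - 1) ?rs ! i)"
      using Comp.IH(2)[OF nth_mem[OF i]] by simp
  qed simp
  then show ?case using Comp.IH(1)[OF f] by (rule eval.comp)
next
  case (Prim f g)
  then obtain n ys where "xs = n # ys"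
    and "rec_nat (clocked_eval f s X ys)
           (\<lambda>m r. if r = 0 then 0 else clocked_eval g s X (m # (r - 1) # ys)) n = Suc y"
    by (auto split: list.splits)
  then show ?case using eval_Prim_if_clocked[OF Prim.IH] by simp
next
  case (Mn f)
  from Mn.prems have "mu_search (\<lambda>n. clocked_eval f s X (n # xs)) s = Suc (Suc y)" by simp
  with Mn.IH show ?case by (rule eval_Mn_if_clocked)
qed

lemma clocked_eval_complete:
  "eval X p xs y \<Longrightarrow> \<forall>\<^sub>F s in sequentially. clocked_eval p s X xs = Suc y"
proof (induction rule: eval.induct)
  case (comp xs gs ys f z)
  have "\<forall>\<^sub>F s in sequentially. map (\<lambda>g. clocked_eval g s X xs) gs = map Suc ys"
    using comp.IH(1)
    by (induction rule: list_all2_induct) (auto elim: eventually_mono dest: eventually_conj)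
  with comp.IH(2) show ?case
    by eventually_elim (simp only: clocked_eval.simps Let_def, simp add: comp_def)
next
  case (primS f g n xs r z)
  from primS.IH show ?case by eventually_elim simp
next
  case (mn f n xs)
  have "\<forall>\<^sub>F s in sequentially. \<forall>m\<in>{..<n}. clocked_eval f s X (m # xs) \<ge> 2"
    using mn.IH(2) by (intro eventually_ball_finite) (auto elim!: eventually_mono)
  moreover have "\<forall>\<^sub>F s in sequentially. n < s" by simp
  ultimately show ?case
    using mn.IH(1)
  proof eventually_elim
    case (elim s)
    then have "mu_search (\<lambda>m. clocked_eval f s X (m # xs)) s = Suc (Suc n)"
      by (intro mu_search_finds) auto
    then show ?case by simp
  qed
qed (simp_all add: eval.intros)

section \<open>Finite sets coded by numbers\<close>

lemma mem_set_decode_iff: "x \<in> set_decode c \<longleftrightarrow> 2 ^ x \<le> c mod 2 ^ Suc x"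
proof -
  have "c mod 2 ^ Suc x = 2 ^ x * (c div 2 ^ x mod 2) + c mod 2 ^ x"
    using mod_mult2_eq[of c "2 ^ x" 2] by (simp add: mult.commute)
  then show ?thesis
    by (cases "even (c div 2 ^ x)")
      (simp_all add: set_decode_def even_iff_mod_2_eq_zero odd_iff_mod_2_eq_one not_le)
qed

lemma less_if_mem_set_decode: "i \<in> set_decode c \<Longrightarrow> i < c"
proof -
  assume "i \<in> set_decode c"
  then have "2 ^ i \<le> c" by (simp add: mem_set_decode_iff) (meson le_trans mod_less_eq_dividend)
  then show "i < c" using less_exp[of i] by linarith
qed

lemma set_decode_mod_power2: "set_decode (c mod 2 ^ w) = set_decode c \<inter> {..<w}"
  by (auto simp: set_decode_def bit_iff_odd[symmetric] take_bit_eq_mod[symmetric] bit_take_bit_iff)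

lemma mod_power2_eq_set_encode_iff:
  assumes "finite S"
  shows "c mod 2 ^ w = set_encode S \<longleftrightarrow> set_decode c \<inter> {..<w} = S"
  by (metis assms set_decode_inverse set_decode_mod_power2 set_encode_inverse)

lemma Int_lessThan_eq_shrink:
  fixes D :: "nat set"
  assumes "D \<inter> {..<w} = \<sigma>" "\<sigma> \<subseteq> {..<u}" "u \<le> w"
  shows "D \<inter> {..<u} = \<sigma>"
  using assms by auto

lemma eventually_clocked_eval_set_encode:
  assumes "finite D" "eval D p xs y"
  shows "\<forall>\<^sub>F z in sequentially.
    set_encode D \<le> z \<and> clocked_eval p z (set_decode (set_encode D)) xs = Suc y"
  using eventually_conj[OF eventually_ge_at_top clocked_eval_complete[OF assms(2)]] assms(1) by simp

section \<open>Total recursive functions\<close>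

definition total_recursive :: "nat \<Rightarrow> (nat list \<Rightarrow> nat) \<Rightarrow> bool" where
  "total_recursive k F \<longleftrightarrow> (\<exists>p. \<forall>xs. length xs = k \<longrightarrow> eval {} p xs (F xs))"

definition total_recursive_list :: "nat \<Rightarrow> nat \<Rightarrow> (nat list \<Rightarrow> nat list) \<Rightarrow> bool" where
  "total_recursive_list k m L \<longleftrightarrow>
     (\<forall>xs. length xs = k \<longrightarrow> length (L xs) = m) \<and> (\<forall>i<m. total_recursive k (\<lambda>xs. L xs ! i))"

text \<open>The list rules below leave the length of an argument list schematic until an enclosing rule
  fixes it, so the syntax directed rules are applied with \<open>rule\<close> rather than \<open>intro\<close>, as in
  \<open>(rule total_recursive_intros | (simp; fail))+\<close>.\<close>

named_theorems total_recursive_intros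

lemma total_recursive_cong:
  "total_recursive k F \<Longrightarrow> (\<And>xs. length xs = k \<Longrightarrow> F xs = G xs) \<Longrightarrow> total_recursive k G"
  unfolding total_recursive_def by simp

lemma total_recursive_zero: "total_recursive k (\<lambda>_. 0)"
  unfolding total_recursive_def by (blast intro: eval.zero)

lemma total_recursive_proj: "i < k \<Longrightarrow> total_recursive k (\<lambda>xs. xs ! i)"
  unfolding total_recursive_def by (blast intro: eval.proj)

lemma total_recursive_compose:
  assumes F: "total_recursive m F" and L: "total_recursive_list k m L"
  shows "total_recursive k (\<lambda>xs. F (L xs))"
proof -
  obtain f where f: "\<And>ys. length ys = m \<Longrightarrow> eval {} f ys (F ys)"
    using F unfolding total_recursive_def by blast
  have "\<forall>i<m. \<exists>g. \<forall>xs. length xs = k \<longrightarrow> eval {} g xs (L xs ! i)"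
    using L unfolding total_recursive_list_def total_recursive_def by blast
  then obtain g where g: "\<And>i xs. i < m \<Longrightarrow> length xs = k \<Longrightarrow> eval {} (g i) xs (L xs ! i)"
    by metis
  have "eval {} (Comp f (map g [0..<m])) xs (F (L xs))" if "length xs = k" for xs
  proof (rule eval.comp)
    show "list_all2 (\<lambda>g y. eval {} g xs y) (map g [0..<m]) (L xs)"
      using L that g by (auto simp: total_recursive_list_def list_all2_conv_all_nth)
    show "eval {} f (L xs) (F (L xs))"
      using L that f by (simp add: total_recursive_list_def)
  qed
  then show ?thesis unfolding total_recursive_def by blast
qed

lemma total_recursive_list_Nil [total_recursive_intros]: "total_recursive_list k 0 (\<lambda>_. [])"
  by (simp add: total_recursive_list_def)

lemma total_recursive_list_Cons [total_recursive_intros]: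
  "total_recursive k G \<Longrightarrow> total_recursive_list k m L \<Longrightarrow> m' = Suc m \<Longrightarrow>
    total_recursive_list k m' (\<lambda>xs. G xs # L xs)"
  by (auto simp: total_recursive_list_def less_Suc_eq_0_disj)

lemma total_recursive_list_id [total_recursive_intros]: "total_recursive_list k k (\<lambda>xs. xs)"
  by (simp add: total_recursive_list_def total_recursive_proj)

lemma total_recursive_list_tl [total_recursive_intros]:
  assumes "total_recursive_list k m L" and "m' = m - 1"
  shows "total_recursive_list k m' (\<lambda>xs. tl (L xs))"
  unfolding total_recursive_list_def
proof (intro conjI allI impI)
  fix i assume "i < m'"
  then have "total_recursive k (\<lambda>xs. L xs ! Suc i)"
    using assms by (simp add: total_recursive_list_def)
  then show "total_recursive k (\<lambda>xs. tl (L xs) ! i)"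
    by (rule total_recursive_cong)
      (use assms \<open>i < m'\<close> in \<open>simp add: total_recursive_list_def nth_tl\<close>)
qed (use assms in \<open>simp add: total_recursive_list_def\<close>)

lemma total_recursive_list_drop [total_recursive_intros]:
  assumes "total_recursive_list k m L" and "m' = m - n"
  shows "total_recursive_list k m' (\<lambda>xs. drop n (L xs))"
  unfolding total_recursive_list_def
proof (intro conjI allI impI)
  fix i assume "i < m'"
  then have "total_recursive k (\<lambda>xs. L xs ! (n + i))"
    using assms by (simp add: total_recursive_list_def)
  then show "total_recursive k (\<lambda>xs. drop n (L xs) ! i)"
    by (rule total_recursive_cong) (use assms \<open>i < m'\<close> in \<open>simp add: total_recursive_list_def\<close>)
qed (use assms in \<open>simp add: total_recursive_list_def\<close>)

lemma total_recursive_list_map [total_recursive_intros]: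
  "(\<And>g. g \<in> set gs \<Longrightarrow> total_recursive k (G g)) \<Longrightarrow>
    total_recursive_list k (length gs) (\<lambda>xs. map (\<lambda>g. G g xs) gs)"
  by (simp add: total_recursive_list_def)

lemma total_recursive_nth [total_recursive_intros]:
  "total_recursive_list k m L \<Longrightarrow> i < m \<Longrightarrow> total_recursive k (\<lambda>xs. L xs ! i)"
  by (simp add: total_recursive_list_def)

lemma total_recursive_Suc [total_recursive_intros]:
  "total_recursive k F \<Longrightarrow> total_recursive k (\<lambda>xs. Suc (F xs))"
proof -
  have "total_recursive 1 (\<lambda>xs. Suc (xs ! 0))"
    unfolding total_recursive_def
  proof (intro exI allI impI)
    fix xs :: "nat list" assume "length xs = 1"
    then obtain x where "xs = [x]" by (auto simp: length_Suc_conv)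
    then show "eval {} Succ xs (Suc (xs ! 0))" by (simp add: eval.succ)
  qed
  moreover assume "total_recursive k F"
  moreover have "total_recursive_list k 1 (\<lambda>xs. [F xs])"
    by (rule total_recursive_intros \<open>total_recursive k F\<close> | (simp; fail))+
  ultimately show ?thesis
    using total_recursive_compose[of 1 "\<lambda>xs. Suc (xs ! 0)" k "\<lambda>xs. [F xs]"] by simp
qed

lemma total_recursive_const [total_recursive_intros]: "total_recursive k (\<lambda>_. n)"
  by (induction n) (simp_all add: total_recursive_zero total_recursive_Suc)

lemma total_recursive_Prim:
  assumes "total_recursive k F" "total_recursive (k + 2) G"
  shows "total_recursive (Suc k) (\<lambda>xs. rec_nat (F (tl xs)) (\<lambda>n r. G (n # r # tl xs)) (hd xs))"
proof -
  obtain f g where f: "\<And>ys. length ys = k \<Longrightarrow> eval {} f ys (F ys)"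
    and g: "\<And>ys. length ys = k + 2 \<Longrightarrow> eval {} g ys (G ys)"
    using assms unfolding total_recursive_def by blast
  have "eval {} (Prim f g) (n # ys) (rec_nat (F ys) (\<lambda>n r. G (n # r # ys)) n)"
    if "length ys = k" for n ys
    by (induction n) (use that f g in \<open>auto intro: eval.prim0 eval.primS\<close>)
  then show ?thesis
    unfolding total_recursive_def by (intro exI[of _ "Prim f g"]) (auto simp: length_Suc_conv)
qed

lemma total_recursive_rec_nat [total_recursive_intros]:
  assumes "total_recursive k N" "total_recursive k F"
    and "total_recursive (k + 2) (\<lambda>ys. G (ys ! 0) (ys ! 1) (drop 2 ys))"
  shows "total_recursive k (\<lambda>xs. rec_nat (F xs) (\<lambda>n r. G n r xs) (N xs))"
proof -
  have "total_recursive k (\<lambda>xs. rec_nat (F (tl (N xs # xs)))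
      (\<lambda>n r. G ((n # r # tl (N xs # xs)) ! 0) ((n # r # tl (N xs # xs)) ! 1)
        (drop 2 (n # r # tl (N xs # xs)))) (hd (N xs # xs)))"
    by (rule total_recursive_compose[OF total_recursive_Prim[OF assms(2,3)]])
      (rule total_recursive_intros assms(1) | (simp; fail))+
  then show ?thesis by simp
qed

lemma total_recursive_Mn:
  assumes "total_recursive (Suc k) F" and "\<And>xs. length xs = k \<Longrightarrow> \<exists>n. F (n # xs) = 0"
  shows "total_recursive k (\<lambda>xs. LEAST n. F (n # xs) = 0)"
proof -
  obtain f where f: "\<And>ys. length ys = Suc k \<Longrightarrow> eval {} f ys (F ys)"
    using assms(1) unfolding total_recursive_def by blast
  have "eval {} (Mn f) xs (LEAST n. F (n # xs) = 0)" if "length xs = k" for xs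
  proof (rule eval.mn)
    show "eval {} f ((LEAST n. F (n # xs) = 0) # xs) 0"
      using f[of "(LEAST n. F (n # xs) = 0) # xs"] LeastI_ex[OF assms(2)[OF that]] that by simp
    show "\<forall>m<(LEAST n. F (n # xs) = 0). \<exists>y. eval {} f (m # xs) y \<and> y \<noteq> 0"
      using f[of "_ # xs"] not_less_Least that by fastforce
  qed
  then show ?thesis unfolding total_recursive_def by blast
qed

lemma total_recursive_pred:
  assumes "total_recursive k F"
  shows "total_recursive k (\<lambda>xs. F xs - 1)"
proof -
  have "rec_nat 0 (\<lambda>n _. n) m = m - 1" for m :: nat by (cases m) simp_all
  moreover have "total_recursive k (\<lambda>xs. rec_nat 0 (\<lambda>n _. n) (F xs))"
    by (rule total_recursive_intros assms | (simp; fail))+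
  ultimately show ?thesis by simp
qed

lemma total_recursive_plus [total_recursive_intros]:
  assumes "total_recursive k F" "total_recursive k G"
  shows "total_recursive k (\<lambda>xs. F xs + G xs)"
proof -
  have "rec_nat b (\<lambda>_ r. Suc r) n = n + b" for n b :: nat by (induction n) simp_all
  moreover have "total_recursive k (\<lambda>xs. rec_nat (G xs) (\<lambda>_ r. Suc r) (F xs))"
    by (rule total_recursive_intros assms | (simp; fail))+
  ultimately show ?thesis by simp
qed

lemma total_recursive_minus [total_recursive_intros]:
  assumes "total_recursive k F" "total_recursive k G"
  shows "total_recursive k (\<lambda>xs. F xs - G xs)"
proof -
  have "rec_nat a (\<lambda>_ r. r - 1) n = a - n" for n a :: nat by (induction n) simp_all
  moreover have "total_recursive k (\<lambda>xs. rec_nat (F xs) (\<lambda>_ r. r - 1) (G xs))"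
    by (rule total_recursive_intros total_recursive_pred assms | (simp; fail))+
  ultimately show ?thesis by simp
qed

lemma total_recursive_times [total_recursive_intros]:
  assumes "total_recursive k F" "total_recursive k G"
  shows "total_recursive k (\<lambda>xs. F xs * G xs)"
proof -
  have "rec_nat 0 (\<lambda>_ r. r + b) n = n * b" for n b :: nat by (induction n) simp_all
  moreover have "total_recursive k (\<lambda>xs. rec_nat 0 (\<lambda>_ r. r + G xs) (F xs))"
    by (rule total_recursive_intros total_recursive_compose[OF assms(2)] assms | (simp; fail))+
  ultimately show ?thesis by simp
qed

lemma total_recursive_power [total_recursive_intros]:
  assumes "total_recursive k F" "total_recursive k G"
  shows "total_recursive k (\<lambda>xs. F xs ^ G xs)"
proof -
  have "rec_nat 1 (\<lambda>_ r. r * b) n = b ^ n" for n b :: nat by (induction n) simp_all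
  moreover have "total_recursive k (\<lambda>xs. rec_nat 1 (\<lambda>_ r. r * F xs) (G xs))"
    by (rule total_recursive_intros total_recursive_compose[OF assms(1)] assms | (simp; fail))+
  ultimately show ?thesis by simp
qed

lemma total_recursive_not [total_recursive_intros]:
  assumes "total_recursive k (\<lambda>xs. of_bool (P xs))"
  shows "total_recursive k (\<lambda>xs. of_bool (\<not> P xs))"
proof -
  have "total_recursive k (\<lambda>xs. 1 - of_bool (P xs))"
    by (rule total_recursive_intros assms | (simp; fail))+
  then show ?thesis by (rule total_recursive_cong) simp
qed

lemma total_recursive_conj [total_recursive_intros]:
  assumes "total_recursive k (\<lambda>xs. of_bool (P xs))"
    and "total_recursive k (\<lambda>xs. of_bool (Q xs))"
  shows "total_recursive k (\<lambda>xs. of_bool (P xs \<and> Q xs))"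
proof -
  have "total_recursive k (\<lambda>xs. of_bool (P xs) * of_bool (Q xs))"
    by (rule total_recursive_intros assms | (simp; fail))+
  then show ?thesis by (rule total_recursive_cong) simp
qed

lemma total_recursive_disj [total_recursive_intros]:
  assumes "total_recursive k (\<lambda>xs. of_bool (P xs))"
    and "total_recursive k (\<lambda>xs. of_bool (Q xs))"
  shows "total_recursive k (\<lambda>xs. of_bool (P xs \<or> Q xs))"
proof -
  have "total_recursive k (\<lambda>xs. of_bool (\<not> (\<not> P xs \<and> \<not> Q xs)))"
    by (rule total_recursive_intros assms | (simp; fail))+
  then show ?thesis by (rule total_recursive_cong) simp
qed

lemma total_recursive_le [total_recursive_intros]:
  assumes "total_recursive k F"
    and "total_recursive k G"
  shows "total_recursive k (\<lambda>xs. of_bool (F xs \<le> G xs))"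
proof -
  have "total_recursive k (\<lambda>xs. 1 - (F xs - G xs))"
    by (rule total_recursive_intros assms | (simp; fail))+
  then show ?thesis by (rule total_recursive_cong) simp
qed

lemma total_recursive_eq [total_recursive_intros]:
  assumes "total_recursive k F"
    and "total_recursive k G"
  shows "total_recursive k (\<lambda>xs. of_bool (F xs = G xs))"
proof -
  have "total_recursive k (\<lambda>xs. of_bool (F xs \<le> G xs \<and> G xs \<le> F xs))"
    by (rule total_recursive_intros assms | (simp; fail))+
  then show ?thesis by (rule total_recursive_cong) auto
qed

lemma total_recursive_If [total_recursive_intros]:
  assumes "total_recursive k (\<lambda>xs. of_bool (P xs))" "total_recursive k F" "total_recursive k G"
  shows "total_recursive k (\<lambda>xs. if P xs then F xs else G xs)"
proof -
  have "total_recursive k (\<lambda>xs. of_bool (P xs) * F xs + of_bool (\<not> P xs) * G xs)"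
    by (rule total_recursive_intros assms | (simp; fail))+
  then show ?thesis by (rule total_recursive_cong) simp
qed

lemma total_recursive_mod [total_recursive_intros]:
  assumes "total_recursive k F" "total_recursive k G"
  shows "total_recursive k (\<lambda>xs. F xs mod G xs)"
proof -
  have "rec_nat 0 (\<lambda>_ r. if Suc r = b then 0 else Suc r) n = n mod b" for n b :: nat
    by (induction n) (simp_all add: mod_Suc)
  moreover have
    "total_recursive k (\<lambda>xs. rec_nat 0 (\<lambda>_ r. if Suc r = G xs then 0 else Suc r) (F xs))"
    by (rule total_recursive_intros total_recursive_compose[OF assms(2)] assms | (simp; fail))+
  ultimately show ?thesis by simp
qed

lemma total_recursive_prod_list [total_recursive_intros]:
  "total_recursive_list k m L \<Longrightarrow> total_recursive k (\<lambda>xs. prod_list (L xs))"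
proof (induction m arbitrary: L)
  case 0
  have "total_recursive k (\<lambda>_. 1)" by (rule total_recursive_const)
  then show ?case by (rule total_recursive_cong) (use 0 in \<open>simp add: total_recursive_list_def\<close>)
next
  case (Suc m)
  have "total_recursive k (\<lambda>xs. L xs ! 0 * prod_list (tl (L xs)))"
    by (rule total_recursive_intros Suc.IH Suc.prems | (simp; fail))+
  then show ?case
  proof (rule total_recursive_cong)
    fix xs :: "nat list" assume "length xs = k"
    then have "length (L xs) = Suc m" using Suc.prems by (simp add: total_recursive_list_def)
    then show "L xs ! 0 * prod_list (tl (L xs)) = prod_list (L xs)" by (cases "L xs") simp_all
  qed
qed

lemma total_recursive_mem_set_decode [total_recursive_intros]:
  assumes "total_recursive k F" "total_recursive k G"
  shows "total_recursive k (\<lambda>xs. of_bool (F xs \<in> set_decode (G xs)))"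
proof -
  have "total_recursive k (\<lambda>xs. of_bool (2 ^ F xs \<le> G xs mod 2 ^ Suc (F xs)))"
    by (rule total_recursive_intros assms | (simp; fail))+
  then show ?thesis by (rule total_recursive_cong) (simp add: mem_set_decode_iff)
qed

lemma total_recursive_compose_Cons:
  assumes "total_recursive (Suc k) (\<lambda>ys. F (ys ! 0) (tl ys))" and "total_recursive m N"
    and "total_recursive_list m k L"
  shows "total_recursive m (\<lambda>xs. F (N xs) (L xs))"
  using total_recursive_compose[OF assms(1) total_recursive_list_Cons[OF assms(2,3)]] by simp

lemma total_recursive_bex [total_recursive_intros]:
  assumes "total_recursive k B" and P: "total_recursive (Suc k) (\<lambda>ys. of_bool (P (ys ! 0) (tl ys)))"
  shows "total_recursive k (\<lambda>xs. of_bool (\<exists>i\<le>B xs. P i xs))"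
proof -
  have rec: "rec_nat (of_bool (P 0 xs)) (\<lambda>n r. of_bool (r = 1 \<or> P (Suc n) xs)) b =
      of_bool (\<exists>i\<le>b. P i xs)"
    for b xs by (induction b) (auto simp: le_Suc_eq)
  have "total_recursive k (\<lambda>xs. rec_nat (of_bool (P 0 xs))
      (\<lambda>n r. of_bool (r = 1 \<or> P (Suc n) xs)) (B xs))"
    by (rule total_recursive_intros assms total_recursive_compose_Cons[OF P] | (simp; fail))+
  then show ?thesis by (simp only: rec)
qed

lemma total_recursive_Least:
  assumes P: "total_recursive (Suc k) (\<lambda>ys. of_bool (P (ys ! 0) (tl ys)))"
    and "\<And>xs. length xs = k \<Longrightarrow> \<exists>n. P n xs"
  shows "total_recursive k (\<lambda>xs. LEAST n. P n xs)"
proof -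
  have "total_recursive (Suc k) (\<lambda>ys. of_bool (\<not> P (ys ! 0) (tl ys)))"
    by (rule total_recursive_not[OF P])
  from total_recursive_Mn[OF this] assms(2) show ?thesis by simp
qed

lemma computable_fun_iff_total_recursive:
  "computable_fun f \<longleftrightarrow> total_recursive 1 (\<lambda>xs. f (xs ! 0))"
proof -
  have "(\<forall>xs. length xs = 1 \<longrightarrow> eval {} p xs (f (xs ! 0))) \<longleftrightarrow> (\<forall>x. eval {} p [x] (f x))" for p
    by (metis One_nat_def length_0_conv length_Suc_conv nth_Cons_0)
  then show ?thesis unfolding computable_fun_def rel_computable_def total_recursive_def by simp
qed

lemma computable_set_if_total_recursive:
  "total_recursive 1 (\<lambda>xs. of_bool (xs ! 0 \<in> C)) \<Longrightarrow> computable_set C"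
  using computable_fun_iff_total_recursive[of "\<lambda>x. of_bool (x \<in> C)"]
  by (simp add: computable_set_def turing_reducible_def computable_fun_def of_bool_def)

section \<open>The clocked interpreter is total recursive\<close>

lemma total_recursive_clocked_eval_compose:
  assumes "total_recursive (m + 2) (\<lambda>ys. clocked_eval p (ys ! 0) (set_decode (ys ! 1)) (drop 2 ys))"
    and "total_recursive k S" "total_recursive k C" "total_recursive_list k m L"
  shows "total_recursive k (\<lambda>xs. clocked_eval p (S xs) (set_decode (C xs)) (L xs))"
proof -
  have "total_recursive_list k (m + 2) (\<lambda>xs. S xs # C xs # L xs)"
    by (rule total_recursive_intros assms(2-4) | (simp; fail))+
  from total_recursive_compose[OF assms(1) this] show ?thesis by simp
qed

lemma total_recursive_clocked_eval_unary:
  assumes "\<And>s X xs. length xs \<noteq> 1 \<Longrightarrow> clocked_eval p s X xs = 0"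
    and "total_recursive 3 (\<lambda>ys. clocked_eval p (ys ! 0) (set_decode (ys ! 1)) [ys ! 2])"
  shows "total_recursive (k + 2) (\<lambda>ys. clocked_eval p (ys ! 0) (set_decode (ys ! 1)) (drop 2 ys))"
proof (cases "k = 1")
  case True
  with assms(2) have
    "total_recursive (k + 2) (\<lambda>ys. clocked_eval p (ys ! 0) (set_decode (ys ! 1)) [ys ! 2])"
    by (simp add: numeral_3_eq_3)
  then show ?thesis
    by (rule total_recursive_cong) (use True in \<open>auto simp: length_Suc_conv numeral_2_eq_2\<close>)
next
  case False
  have "total_recursive (k + 2) (\<lambda>_. 0)" by (rule total_recursive_const)
  then show ?thesis by (rule total_recursive_cong) (use False assms(1) in simp)
qed

lemma total_recursive_clocked_eval_Proj:
  "total_recursive (k + 2) (\<lambda>ys. clocked_eval (Proj i) (ys ! 0) (set_decode (ys ! 1)) (drop 2 ys))"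
proof (cases "i < k")
  case True
  have "total_recursive (k + 2) (\<lambda>ys. Suc (ys ! (i + 2)))"
    by (rule total_recursive_intros | (simp add: True; fail))+
  then show ?thesis by (rule total_recursive_cong) (use True in simp)
next
  case False
  have "total_recursive (k + 2) (\<lambda>_. 0)" by (rule total_recursive_const)
  then show ?thesis by (rule total_recursive_cong) (use False in simp)
qed

lemma total_recursive_clocked_eval_Comp:
  assumes f: "\<And>k. total_recursive (k + 2)
      (\<lambda>ys. clocked_eval f (ys ! 0) (set_decode (ys ! 1)) (drop 2 ys))"
    and gs: "\<And>g k. g \<in> set gs \<Longrightarrow>
      total_recursive (k + 2) (\<lambda>ys. clocked_eval g (ys ! 0) (set_decode (ys ! 1)) (drop 2 ys))"
  shows "total_recursive (k + 2)
    (\<lambda>ys. clocked_eval (Comp f gs) (ys ! 0) (set_decode (ys ! 1)) (drop 2 ys))"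
proof -
  have "total_recursive (k + 2) (\<lambda>ys.
      if prod_list (map (\<lambda>g. clocked_eval g (ys ! 0) (set_decode (ys ! 1)) (drop 2 ys)) gs) = 0
      then 0
      else clocked_eval f (ys ! 0) (set_decode (ys ! 1))
        (map (\<lambda>g. clocked_eval g (ys ! 0) (set_decode (ys ! 1)) (drop 2 ys) - 1) gs))"
    by (rule total_recursive_intros gs total_recursive_clocked_eval_compose[OF f] | (simp; fail))+
  then show ?thesis
    by (rule total_recursive_cong) (simp add: Let_def prod_list_zero_iff comp_def)
qed

lemma total_recursive_clocked_eval_Prim:
  assumes f: "\<And>k. total_recursive (k + 2)
      (\<lambda>ys. clocked_eval f (ys ! 0) (set_decode (ys ! 1)) (drop 2 ys))"
    and g: "\<And>k. total_recursive (k + 2)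
      (\<lambda>ys. clocked_eval g (ys ! 0) (set_decode (ys ! 1)) (drop 2 ys))"
  shows "total_recursive (k + 2)
    (\<lambda>ys. clocked_eval (Prim f g) (ys ! 0) (set_decode (ys ! 1)) (drop 2 ys))"
proof (cases k)
  case 0
  have "total_recursive (k + 2) (\<lambda>_. 0)" by (rule total_recursive_const)
  then show ?thesis by (rule total_recursive_cong) (use 0 in simp)
next
  case (Suc j)
  have "total_recursive (k + 2) (\<lambda>ys.
      rec_nat (clocked_eval f (ys ! 0) (set_decode (ys ! 1)) (drop 3 ys))
        (\<lambda>m r. if r = 0 then 0
               else clocked_eval g (ys ! 0) (set_decode (ys ! 1)) (m # (r - 1) # drop 3 ys))
        (ys ! 2))"
    by (rule total_recursive_intros total_recursive_clocked_eval_compose[OF f]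
        total_recursive_clocked_eval_compose[OF g] | (simp add: Suc; fail))+
  then show ?thesis
    by (rule total_recursive_cong) (simp add: Suc Cons_nth_drop_Suc[symmetric] cong: if_cong)
qed

lemma total_recursive_clocked_eval_Mn:
  assumes f: "\<And>k. total_recursive (k + 2)
      (\<lambda>ys. clocked_eval f (ys ! 0) (set_decode (ys ! 1)) (drop 2 ys))"
  shows "total_recursive (k + 2)
    (\<lambda>ys. clocked_eval (Mn f) (ys ! 0) (set_decode (ys ! 1)) (drop 2 ys))"
proof -
  have "total_recursive (k + 2) (\<lambda>ys.
      rec_nat 0 (\<lambda>t r. if r \<noteq> 0 then r
          else if clocked_eval f (ys ! 0) (set_decode (ys ! 1)) (t # drop 2 ys) = 0 then 1
          else if clocked_eval f (ys ! 0) (set_decode (ys ! 1)) (t # drop 2 ys) = 1 then t + 2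
          else 0) (ys ! 0) - 1)"
    by (rule total_recursive_intros total_recursive_clocked_eval_compose[OF f] | (simp; fail))+
  then show ?thesis
    by (rule total_recursive_cong) (simp add: mu_search_eq_rec_nat cong: if_cong)
qed

theorem total_recursive_clocked_eval:
  "total_recursive (k + 2) (\<lambda>ys. clocked_eval p (ys ! 0) (set_decode (ys ! 1)) (drop 2 ys))"
proof (induction p arbitrary: k)
  case Zero
  have "total_recursive (k + 2) (\<lambda>_. 1)" by (rule total_recursive_const)
  then show ?case by (rule total_recursive_cong) simp
next
  case Succ
  have "total_recursive 3 (\<lambda>ys. ys ! 2 + 2)"
    by (rule total_recursive_intros | (simp; fail))+
  then have "total_recursive 3 (\<lambda>ys. clocked_eval Succ (ys ! 0) (set_decode (ys ! 1)) [ys ! 2])"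
    by (rule total_recursive_cong) simp
  then show ?case by (rule total_recursive_clocked_eval_unary[rotated]) (auto split: list.split)
next
  case Orc
  have "total_recursive 3 (\<lambda>ys. if ys ! 2 \<in> set_decode (ys ! 1) then 2 else 1)"
    by (rule total_recursive_intros | (simp; fail))+
  then have "total_recursive 3 (\<lambda>ys. clocked_eval Orc (ys ! 0) (set_decode (ys ! 1)) [ys ! 2])"
    by (rule total_recursive_cong) simp
  then show ?case by (rule total_recursive_clocked_eval_unary[rotated]) (auto split: list.split)
next
  case (Proj i)
  show ?case by (rule total_recursive_clocked_eval_Proj)
next
  case (Comp f gs)
  then show ?case by (rule total_recursive_clocked_eval_Comp)
next
  case (Prim f g)
  then show ?case by (rule total_recursive_clocked_eval_Prim)
next
  case (Mn f)
  then show ?case by (rule total_recursive_clocked_eval_Mn)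
qed

lemmas total_recursive_clocked_eval_intro [total_recursive_intros] =
  total_recursive_clocked_eval_compose[OF total_recursive_clocked_eval]

section \<open>Searching through finite extensions\<close>

text \<open>In the search predicates below, \<open>K = set_encode \<sigma>\<close> codes a finite set, and \<open>c mod 2 ^ w = K\<close>
  says that the set coded by \<open>c\<close> agrees with \<open>\<sigma>\<close> below \<open>w\<close>. Bounding both the codes and the
  number of steps by \<open>z\<close> is what makes the predicates total recursive.\<close>

definition outputs_within :: "recf \<Rightarrow> nat \<Rightarrow> nat \<Rightarrow> nat \<Rightarrow> nat \<Rightarrow> nat \<Rightarrow> bool" where
  "outputs_within p K w z x v \<longleftrightarrow>
     (\<exists>c\<le>z. c mod 2 ^ w = K \<and> clocked_eval p z (set_decode c) [x] = Suc v)"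

lemma total_recursive_outputs_within [total_recursive_intros]:
  assumes "total_recursive k Z" "total_recursive k X" "total_recursive k V"
  shows "total_recursive k (\<lambda>xs. of_bool (outputs_within p K w (Z xs) (X xs) (V xs)))"
  unfolding outputs_within_def
  by (rule total_recursive_intros assms total_recursive_compose[OF assms(1)]
      total_recursive_compose[OF assms(2)] total_recursive_compose[OF assms(3)] | (simp; fail))+

lemma outputs_within_if_eval:
  assumes "finite \<sigma>" "finite D" "D \<inter> {..<w} = \<sigma>" "eval D p [x] y"
  shows "\<exists>z. outputs_within p (set_encode \<sigma>) w z x y"
proof -
  from eventually_clocked_eval_set_encode[OF assms(2,4)] obtain z where
    "set_encode D \<le> z" "clocked_eval p z (set_decode (set_encode D)) [x] = Suc y"
    unfolding eventually_sequentially by (meson order_refl)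
  moreover have "set_encode D mod 2 ^ w = set_encode \<sigma>"
    using assms(1-3) by (simp add: mod_power2_eq_set_encode_iff)
  ultimately show ?thesis unfolding outputs_within_def by blast
qed

lemma eval_if_outputs_within:
  assumes "outputs_within p (set_encode \<sigma>) w z x v" "finite \<sigma>"
  obtains D where "finite D" "D \<inter> {..<w} = \<sigma>" "eval D p [x] v"
proof -
  from assms(1) obtain c
    where c: "c mod 2 ^ w = set_encode \<sigma>" "clocked_eval p z (set_decode c) [x] = Suc v"
    unfolding outputs_within_def by blast
  show thesis
  proof (rule that)
    show "set_decode c \<inter> {..<w} = \<sigma>" using c(1) assms(2) by (simp add: mod_power2_eq_set_encode_iff)
    show "eval (set_decode c) p [x] v" using c(2) by (rule clocked_eval_sound)
  qed simp
qed

lemma computable_set_if_extensions_compute: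
  assumes "finite \<sigma>"
    and converges: "\<And>x. \<exists>D y. finite D \<and> D \<inter> {..<b} = \<sigma> \<and> eval D p [x] y"
    and correct: "\<And>D x y. finite D \<Longrightarrow> D \<inter> {..<b} = \<sigma> \<Longrightarrow> eval D p [x] y \<Longrightarrow> y = of_bool (x \<in> C)"
  shows "computable_set C"
proof -
  let ?outputs = "outputs_within p (set_encode \<sigma>) b"
  have sound: "v = of_bool (x \<in> C)" if "?outputs z x v" for z x v
    using that assms(1) by (rule eval_if_outputs_within) (rule correct)
  have "\<exists>z. ?outputs z x (of_bool (x \<in> C))" for x
    using converges[of x] outputs_within_if_eval[OF assms(1)] correct by metis
  then have ex: "\<exists>z. ?outputs z x 0 \<or> ?outputs z x 1" for x
    by (metis (full_types) of_bool_eq(1,2))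
  define search where "search x = (LEAST z. ?outputs z x 0 \<or> ?outputs z x 1)" for x
  have search: "total_recursive 1 (\<lambda>xs. search (xs ! 0))"
    unfolding search_def using ex
    by (intro total_recursive_Least) (rule total_recursive_intros | (simp; fail))+
  have "total_recursive 1 (\<lambda>xs. of_bool (?outputs (search (xs ! 0)) (xs ! 0) 1))"
    by (rule total_recursive_intros search | (simp; fail))+
  moreover have "?outputs (search x) x 1 \<longleftrightarrow> x \<in> C" for x
  proof -
    have "?outputs (search x) x 0 \<or> ?outputs (search x) x 1"
      unfolding search_def by (rule LeastI_ex[OF ex])
    moreover have "\<not> ?outputs (search x) x (of_bool (x \<notin> C))"
      using sound[of "search x" x] by (cases "x \<in> C") auto
    ultimately show ?thesis by (cases "x \<in> C") auto
  qed
  ultimately show ?thesis by (intro computable_set_if_total_recursive) simp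
qed

definition disagree_within :: "recf \<Rightarrow> nat \<Rightarrow> nat \<Rightarrow> nat \<Rightarrow> bool" where
  "disagree_within p K w z \<longleftrightarrow> (\<exists>x\<le>z. \<exists>c0\<le>z. \<exists>c1\<le>z.
     c0 mod 2 ^ w = K \<and> c1 mod 2 ^ w = K \<and>
     clocked_eval p z (set_decode c0) [x] \<noteq> 0 \<and> clocked_eval p z (set_decode c1) [x] \<noteq> 0 \<and>
     clocked_eval p z (set_decode c0) [x] \<noteq> clocked_eval p z (set_decode c1) [x])"

lemma total_recursive_disagree_within [total_recursive_intros]:
  assumes "total_recursive k W" "total_recursive k Z"
  shows "total_recursive k (\<lambda>xs. of_bool (disagree_within p K (W xs) (Z xs)))"
  unfolding disagree_within_def
  by (rule total_recursive_intros assms total_recursive_compose[OF assms(1)]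
      total_recursive_compose[OF assms(2)] | (simp; fail))+

lemma disagree_within_if_outputs_differ:
  assumes "finite \<sigma>" "finite D0" "finite D1" "D0 \<inter> {..<w} = \<sigma>" "D1 \<inter> {..<w} = \<sigma>"
    and "eval D0 p [x] y0" "eval D1 p [x] y1" "y0 \<noteq> y1"
  shows "\<exists>z. disagree_within p (set_encode \<sigma>) w z"
proof -
  have codes: "set_encode D0 mod 2 ^ w = set_encode \<sigma>" "set_encode D1 mod 2 ^ w = set_encode \<sigma>"
    using assms(1-5) by (simp_all add: mod_power2_eq_set_encode_iff)
  have "\<forall>\<^sub>F z in sequentially. x \<le> z" by simp
  moreover note eventually_clocked_eval_set_encode[OF assms(2,6)]
    eventually_clocked_eval_set_encode[OF assms(3,7)]
  ultimately have "\<forall>\<^sub>F z in sequentially. disagree_within p (set_encode \<sigma>) w z"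
  proof eventually_elim
    case (elim z)
    then have "clocked_eval p z (set_decode (set_encode D0)) [x] \<noteq> 0"
      "clocked_eval p z (set_decode (set_encode D1)) [x] \<noteq> 0"
      "clocked_eval p z (set_decode (set_encode D0)) [x] \<noteq>
       clocked_eval p z (set_decode (set_encode D1)) [x]"
      using assms(8) by simp_all
    with elim codes show ?case unfolding disagree_within_def by meson
  qed
  then show ?thesis by (auto simp: eventually_sequentially)
qed

lemma outputs_differ_if_disagree_within:
  assumes "disagree_within p (set_encode \<sigma>) w z" "finite \<sigma>"
  obtains D0 D1 x y0 y1 where "finite D0" "finite D1" "D0 \<inter> {..<w} = \<sigma>" "D1 \<inter> {..<w} = \<sigma>"
    "D0 \<union> D1 \<subseteq> {..<z}" "eval D0 p [x] y0" "eval D1 p [x] y1" "y0 \<noteq> y1"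
proof -
  obtain x c0 c1
    where c: "c0 \<le> z" "c1 \<le> z" "c0 mod 2 ^ w = set_encode \<sigma>" "c1 mod 2 ^ w = set_encode \<sigma>"
    and halt: "clocked_eval p z (set_decode c0) [x] \<noteq> 0" "clocked_eval p z (set_decode c1) [x] \<noteq> 0"
    and differ: "clocked_eval p z (set_decode c0) [x] \<noteq> clocked_eval p z (set_decode c1) [x]"
    using assms(1) unfolding disagree_within_def by blast
  obtain y0 y1 where y: "clocked_eval p z (set_decode c0) [x] = Suc y0"
    "clocked_eval p z (set_decode c1) [x] = Suc y1"
    using halt not0_implies_Suc by blast
  show thesis
  proof (rule that)
    show "set_decode c0 \<inter> {..<w} = \<sigma>" "set_decode c1 \<inter> {..<w} = \<sigma>"
      using c(3,4) assms(2) by (simp_all add: mod_power2_eq_set_encode_iff)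
    show "set_decode c0 \<union> set_decode c1 \<subseteq> {..<z}"
      using c(1,2) less_if_mem_set_decode by fastforce
    show "eval (set_decode c0) p [x] y0" "eval (set_decode c1) p [x] y1"
      using y by (simp_all add: clocked_eval_sound)
    show "y0 \<noteq> y1" using differ y by simp
  qed simp_all
qed

section \<open>Hyperimmunity\<close>

lemma enumerate_le_strict_mono:
  assumes "infinite S" "strict_mono e" "\<And>n. e n \<in> S"
  shows "enumerate S n \<le> e n"
proof (induction n)
  case 0
  show ?case unfolding enumerate_0 by (rule Least_le) (rule assms(3))
next
  case (Suc n)
  with assms(2) have "enumerate S n < e (Suc n)"
    by (meson le_less_trans lessI strict_mono_def)
  with assms(3) show ?case unfolding enumerate_Suc''[OF assms(1)] by (blast intro: Least_le)
qed

lemma computable_fun_iterate: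
  assumes "computable_fun h"
  shows "computable_fun (\<lambda>n. (h ^^ Suc n) 0)"
proof -
  have h: "total_recursive 1 (\<lambda>xs. h (xs ! 0))"
    using assms by (simp add: computable_fun_iff_total_recursive)
  have "total_recursive_list (1 + 2) 1 (\<lambda>ys. [ys ! 1])"
    by (rule total_recursive_intros | (simp; fail))+
  from total_recursive_compose[OF h this] have step: "total_recursive (1 + 2) (\<lambda>ys. h (ys ! 1))"
    by (simp only: nth_Cons_0)
  have "total_recursive 1 (\<lambda>xs. rec_nat (h 0) (\<lambda>_ r. h r) (xs ! 0))"
    by (rule total_recursive_intros step | (simp; fail))+
  moreover have "rec_nat (h 0) (\<lambda>_ r. h r) n = (h ^^ Suc n) 0" for n
    by (induction n) simp_all
  ultimately show ?thesis by (simp add: computable_fun_iff_total_recursive)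
qed

lemma not_hyperimmune_if_computable_gaps:
  assumes "computable_fun h" and gaps: "\<And>b. \<exists>i\<in>S. b \<le> i \<and> i < h b"
  shows "\<not> hyperimmune S"
proof -
  obtain e where e: "\<And>n. e n \<in> S" "\<And>n. (h ^^ n) 0 \<le> e n" "\<And>n. e n < (h ^^ Suc n) 0"
    using gaps[of "(h ^^ _) 0"] by (simp only: funpow.simps comp_apply) metis
  have "strict_mono e"
    unfolding strict_mono_Suc_iff using e(2,3) by (meson less_le_trans)
  moreover have "infinite S"
    unfolding infinite_nat_iff_unbounded_le using gaps by blast
  ultimately have "enumerate S n \<le> e n" for n
    using enumerate_le_strict_mono e(1) by blast
  with e(3) have "enumerate S n \<le> (h ^^ Suc n) 0" for n
    by (meson le_less_trans less_imp_le)
  with computable_fun_iterate[OF assms(1)] show ?thesis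
    unfolding hyperimmune_def by blast
qed

lemma outside_element_if_outputs_differ:
  fixes D0 D1 :: "nat set"
  assumes "\<sigma> \<subseteq> A" "\<sigma> \<subseteq> {..<u}" "u \<le> w"
    and correct: "\<And>D x y. finite D \<Longrightarrow> D \<subseteq> A \<Longrightarrow> D \<inter> {..<u} = \<sigma> \<Longrightarrow> eval D p [x] y \<Longrightarrow> y = f x"
    and D: "finite D0" "finite D1" "D0 \<inter> {..<w} = \<sigma>" "D1 \<inter> {..<w} = \<sigma>"
      "eval D0 p [x] y0" "eval D1 p [x] y1" "y0 \<noteq> y1"
  shows "\<exists>i \<in> D0 \<union> D1. i \<notin> A \<and> w \<le> i"
proof -
  have restrict: "D0 \<inter> {..<u} = \<sigma>" "D1 \<inter> {..<u} = \<sigma>"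
    using Int_lessThan_eq_shrink[OF D(3) assms(2,3)] Int_lessThan_eq_shrink[OF D(4) assms(2,3)] .
  have "\<not> (D0 \<subseteq> A \<and> D1 \<subseteq> A)"
  proof
    assume "D0 \<subseteq> A \<and> D1 \<subseteq> A"
    then have "y0 = f x" "y1 = f x"
      using correct[OF D(1) _ restrict(1) D(5)] correct[OF D(2) _ restrict(2) D(6)] by simp_all
    with D(7) show False by simp
  qed
  then obtain i where i: "i \<in> D0 \<union> D1" "i \<notin> A" by blast
  have "w \<le> i"
  proof (rule ccontr)
    assume "\<not> w \<le> i"
    with i(1) have "i \<in> D0 \<inter> {..<w} \<union> D1 \<inter> {..<w}" by auto
    with D(3,4) assms(1) i(2) show False by auto
  qed
  with i show ?thesis by blast
qed

definition extensions_agree :: "recf \<Rightarrow> nat set \<Rightarrow> nat \<Rightarrow> bool" where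
  "extensions_agree p \<sigma> b \<longleftrightarrow> (\<forall>D0 D1 x y0 y1. finite D0 \<longrightarrow> finite D1 \<longrightarrow>
     D0 \<inter> {..<b} = \<sigma> \<longrightarrow> D1 \<inter> {..<b} = \<sigma> \<longrightarrow> eval D0 p [x] y0 \<longrightarrow> eval D1 p [x] y1 \<longrightarrow> y0 = y1)"

lemma extensions_agree_if_hyperimmune:
  assumes hyp: "hyperimmune (- A)" and \<sigma>: "finite \<sigma>" "\<sigma> \<subseteq> A" "\<sigma> \<subseteq> {..<u}"
    and correct: "\<And>D x y. finite D \<Longrightarrow> D \<subseteq> A \<Longrightarrow> D \<inter> {..<u} = \<sigma> \<Longrightarrow> eval D p [x] y \<Longrightarrow> y = f x"
  shows "\<exists>b\<ge>u. extensions_agree p \<sigma> b"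
proof (rule ccontr)
  assume "\<not> ?thesis"
  then have differ: "\<forall>b\<ge>u. \<exists>D0 D1 x y0 y1. finite D0 \<and> finite D1 \<and> D0 \<inter> {..<b} = \<sigma> \<and>
      D1 \<inter> {..<b} = \<sigma> \<and> eval D0 p [x] y0 \<and> eval D1 p [x] y1 \<and> y0 \<noteq> y1"
    unfolding extensions_agree_def by simp
  have disagree: "\<exists>z. disagree_within p (set_encode \<sigma>) (b + u) z" for b
  proof -
    obtain D0 D1 x y0 y1 where "finite D0" "finite D1" "D0 \<inter> {..<b + u} = \<sigma>" "D1 \<inter> {..<b + u} = \<sigma>"
      "eval D0 p [x] y0" "eval D1 p [x] y1" "y0 \<noteq> y1"
      using differ[rule_format, OF le_add2[of u b]] by (elim exE conjE) (rule that)
    then show ?thesis by (rule disagree_within_if_outputs_differ[OF \<sigma>(1)])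
  qed
  define h where "h b = Suc (LEAST z. disagree_within p (set_encode \<sigma>) (b + u) z)" for b
  have "total_recursive 1 (\<lambda>xs. h (xs ! 0))"
    unfolding h_def using disagree
    by (intro total_recursive_Suc total_recursive_Least)
      (rule total_recursive_intros | (simp; fail))+
  then have "computable_fun h" by (simp add: computable_fun_iff_total_recursive)
  moreover have "\<exists>i\<in>- A. b \<le> i \<and> i < h b" for b
  proof -
    obtain D0 D1 x y0 y1
      where D: "finite D0" "finite D1" "D0 \<inter> {..<b + u} = \<sigma>" "D1 \<inter> {..<b + u} = \<sigma>"
      "D0 \<union> D1 \<subseteq> {..<LEAST z. disagree_within p (set_encode \<sigma>) (b + u) z}"
      "eval D0 p [x] y0" "eval D1 p [x] y1" "y0 \<noteq> y1"
      by (rule outputs_differ_if_disagree_within[OF LeastI_ex[OF disagree] \<sigma>(1)])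
    have "\<exists>i\<in>D0 \<union> D1. i \<notin> A \<and> b + u \<le> i"
      by (rule outside_element_if_outputs_differ[OF \<sigma>(2,3) le_add2 correct D(1-4,6-8)])
    then obtain i where "i \<in> D0 \<union> D1" "i \<notin> A" "b + u \<le> i" by blast
    with D(5) show ?thesis unfolding h_def by (intro bexI[of _ i]) auto
  qed
  ultimately have "\<not> hyperimmune (- A)" by (rule not_hyperimmune_if_computable_gaps)
  with hyp show False by contradiction
qed

section \<open>Forcing the requirements\<close>

definition forces_incorrect :: "nat set \<Rightarrow> nat set \<Rightarrow> recf \<Rightarrow> nat set \<Rightarrow> nat \<Rightarrow> bool" where
  "forces_incorrect A C p \<sigma> u \<longleftrightarrow> (\<forall>G\<subseteq>A. G \<inter> {..<u} = \<sigma> \<longrightarrow> \<not> (\<forall>x. eval G p [x] (of_bool (x \<in> C))))"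

lemma requirement_if_wrong_value:
  assumes D: "finite D" "D \<subseteq> A" "D \<inter> {..<u} = \<sigma>" "eval D p [x] y" "y \<noteq> of_bool (x \<in> C)"
  shows "\<exists>\<sigma>' u'. \<sigma>' \<subseteq> A \<inter> {..<u'} \<and> u \<le> u' \<and> \<sigma>' \<inter> {..<u} = \<sigma> \<and>
           forces_incorrect A C p \<sigma>' u'"
proof -
  obtain k where k: "D \<subseteq> {..<k}" using finite_nat_bounded[OF D(1)] by blast
  have "\<forall>\<^sub>F w in sequentially. k \<le> w \<and> u \<le> w"
    by (intro eventually_conj eventually_ge_at_top)
  then have "\<forall>\<^sub>F w in sequentially. D \<subseteq> {..<w} \<and> u \<le> w"
    by (rule eventually_mono) (use k in auto)
  then have "\<forall>\<^sub>F w in sequentially. (D \<subseteq> {..<w} \<and> u \<le> w) \<and>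
      (\<forall>G. G \<inter> {..<w} = D \<inter> {..<w} \<longrightarrow> eval G p [x] y)"
    using eval_finite_use[OF D(4)] by (rule eventually_conj)
  then obtain u' where u': "D \<subseteq> {..<u'}" "u \<le> u'"
    and use: "\<And>G. G \<inter> {..<u'} = D \<inter> {..<u'} \<Longrightarrow> eval G p [x] y"
    unfolding eventually_sequentially by (meson order_refl)
  have "\<not> (\<forall>x. eval G p [x] (of_bool (x \<in> C)))" if "G \<inter> {..<u'} = D" for G
  proof -
    from that u'(1) have "G \<inter> {..<u'} = D \<inter> {..<u'}" by auto
    then have "eval G p [x] y" by (rule use)
    with D(5) show ?thesis using eval_deterministic by blast
  qed
  with D(2,3) u' show ?thesis
    unfolding forces_incorrect_def by (intro exI[of _ D] exI[of _ u']) auto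
qed

lemma not_eval_if_no_finite_extension_evals:
  assumes "\<And>D y. finite D \<Longrightarrow> D \<subseteq> A \<Longrightarrow> D \<inter> {..<b} = \<sigma> \<Longrightarrow> \<not> eval D p xs y"
    and "G \<subseteq> A" "G \<inter> {..<b} = \<sigma>"
  shows "\<not> eval G p xs y"
proof
  assume "eval G p xs y"
  then have "\<forall>\<^sub>F w in sequentially. eval (G \<inter> {..<w}) p xs y \<and> b \<le> w"
    by (intro eventually_conj eval_restrict_finite eventually_ge_at_top)
  then obtain w where "eval (G \<inter> {..<w}) p xs y" "b \<le> w"
    unfolding eventually_sequentially by (meson order_refl)
  moreover from assms(2,3) \<open>b \<le> w\<close> have "G \<inter> {..<w} \<subseteq> A" "(G \<inter> {..<w}) \<inter> {..<b} = \<sigma>" by auto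
  ultimately show False using assms(1)[of "G \<inter> {..<w}"] by simp
qed

lemma requirement_if_consistent:
  assumes "\<not> computable_set C" and \<sigma>: "finite \<sigma>" "\<sigma> \<subseteq> A" "\<sigma> \<subseteq> {..<u}" and "u \<le> b"
    and correct: "\<And>D x y. finite D \<Longrightarrow> D \<subseteq> A \<Longrightarrow> D \<inter> {..<u} = \<sigma> \<Longrightarrow> eval D p [x] y \<Longrightarrow>
      y = of_bool (x \<in> C)"
    and "extensions_agree p \<sigma> b"
  shows "forces_incorrect A C p \<sigma> b"
proof (cases "\<forall>x. \<exists>D y. finite D \<and> D \<subseteq> A \<and> D \<inter> {..<b} = \<sigma> \<and> eval D p [x] y")
  case True
  have "computable_set C"
  proof (rule computable_set_if_extensions_compute[OF \<sigma>(1)])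
    fix x
    obtain D' y' where D': "finite D'" "D' \<subseteq> A" "D' \<inter> {..<b} = \<sigma>" "eval D' p [x] y'"
      using True[rule_format, of x] by (elim exE conjE) (rule that; assumption)
    then show "\<exists>D y. finite D \<and> D \<inter> {..<b} = \<sigma> \<and> eval D p [x] y"
      by (intro exI[of _ D'] exI[of _ y']) simp
    have "y' = of_bool (x \<in> C)"
      using correct[OF D'(1,2) Int_lessThan_eq_shrink[OF D'(3) \<sigma>(3) \<open>u \<le> b\<close>] D'(4)] .
    moreover fix D y assume D: "finite D" "D \<inter> {..<b} = \<sigma>" "eval D p [x] y"
    with D' \<open>extensions_agree p \<sigma> b\<close> have "y = y'" unfolding extensions_agree_def by blast
    ultimately show "y = of_bool (x \<in> C)" by simp
  qed
  with assms(1) show ?thesis by contradiction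
next
  case False
  then obtain x where "\<not> (\<exists>D y. finite D \<and> D \<subseteq> A \<and> D \<inter> {..<b} = \<sigma> \<and> eval D p [x] y)"
    by blast
  then have "\<And>D y. finite D \<Longrightarrow> D \<subseteq> A \<Longrightarrow> D \<inter> {..<b} = \<sigma> \<Longrightarrow> \<not> eval D p [x] y"
    by blast
  then have "\<not> eval G p [x] (of_bool (x \<in> C))" if "G \<subseteq> A" "G \<inter> {..<b} = \<sigma>" for G
    using that by (rule not_eval_if_no_finite_extension_evals)
  then show ?thesis unfolding forces_incorrect_def by blast
qed

lemma requirement_extension:
  assumes "\<not> computable_set C" "hyperimmune (- A)" "finite \<sigma>" "\<sigma> \<subseteq> A" "\<sigma> \<subseteq> {..<u}"
  shows "\<exists>\<sigma>' u'. \<sigma>' \<subseteq> A \<inter> {..<u'} \<and> u \<le> u' \<and> \<sigma>' \<inter> {..<u} = \<sigma> \<and>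
           forces_incorrect A C p \<sigma>' u'"
proof (cases "\<exists>D x y. finite D \<and> D \<subseteq> A \<and> D \<inter> {..<u} = \<sigma> \<and> eval D p [x] y \<and> y \<noteq> of_bool (x \<in> C)")
  case True
  then obtain D x y where "finite D" "D \<subseteq> A" "D \<inter> {..<u} = \<sigma>" "eval D p [x] y" "y \<noteq> of_bool (x \<in> C)"
    by (elim exE conjE) (rule that)
  then show ?thesis by (rule requirement_if_wrong_value)
next
  case False
  have correct: "y = of_bool (x \<in> C)"
    if "finite D" "D \<subseteq> A" "D \<inter> {..<u} = \<sigma>" "eval D p [x] y" for D x y
  proof (rule ccontr)
    assume "y \<noteq> of_bool (x \<in> C)"
    with that have "\<exists>D x y. finite D \<and> D \<subseteq> A \<and> D \<inter> {..<u} = \<sigma> \<and> eval D p [x] y \<and>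
        y \<noteq> of_bool (x \<in> C)"
      by (intro exI conjI)
    with False show False by contradiction
  qed
  have "\<exists>b\<ge>u. extensions_agree p \<sigma> b"
    by (rule extensions_agree_if_hyperimmune[OF assms(2-5)]) (rule correct)
  then obtain b where "u \<le> b" "extensions_agree p \<sigma> b" by blast
  then have "forces_incorrect A C p \<sigma> b"
    by (intro requirement_if_consistent[OF assms(1,3-5)]) (assumption | rule correct)+
  moreover have "\<sigma> \<subseteq> A \<inter> {..<b}" "\<sigma> \<inter> {..<u} = \<sigma>" using assms(4,5) \<open>u \<le> b\<close> by auto
  ultimately show ?thesis using \<open>u \<le> b\<close> by (intro exI[of _ \<sigma>] exI[of _ b]) simp
qed

section \<open>The finite extension construction\<close>

lemma UN_chain_Int_lessThan:
  fixes \<sigma> :: "nat \<Rightarrow> nat set"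
  assumes bounded: "\<And>n. \<sigma> n \<subseteq> {..<u n}" and mono: "\<And>n. u n \<le> u (Suc n)"
    and extends: "\<And>n. \<sigma> (Suc n) \<inter> {..<u n} = \<sigma> n"
  shows "(\<Union>m. \<sigma> m) \<inter> {..<u n} = \<sigma> n"
proof -
  have later: "\<sigma> m \<inter> {..<u n} = \<sigma> n" if "n \<le> m" for n m
    using that
  proof (induction m rule: dec_induct)
    case base
    show ?case using bounded[of n] by blast
  next
    case (step m)
    have "u n \<le> u m" using step.hyps(1) mono by (simp add: lift_Suc_mono_le)
    then have "\<sigma> (Suc m) \<inter> {..<u n} = (\<sigma> (Suc m) \<inter> {..<u m}) \<inter> {..<u n}" by auto
    with extends step.IH show ?case by simp
  qed
  have "\<sigma> m \<inter> {..<u n} \<subseteq> \<sigma> n" for m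
  proof (cases "n \<le> m")
    case False
    then have "\<sigma> n \<inter> {..<u m} = \<sigma> m" by (intro later) simp
    then show ?thesis by blast
  qed (simp add: later)
  with later[of n] show ?thesis by blast
qed

lemma growing_extension:
  fixes A :: "nat set" and R :: "nat \<Rightarrow> nat set \<Rightarrow> nat \<Rightarrow> bool"
  assumes "infinite A"
    and extend: "\<And>n \<sigma> u. finite \<sigma> \<Longrightarrow> \<sigma> \<subseteq> A \<Longrightarrow> \<sigma> \<subseteq> {..<u} \<Longrightarrow>
      \<exists>\<sigma>' u'. \<sigma>' \<subseteq> A \<inter> {..<u'} \<and> u \<le> u' \<and> \<sigma>' \<inter> {..<u} = \<sigma> \<and> R n \<sigma>' u'"
    and \<sigma>: "\<sigma> \<subseteq> A \<inter> {..<u}"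
  shows "\<exists>\<sigma>' u'. \<sigma>' \<subseteq> A \<inter> {..<u'} \<and> u \<le> u' \<and> \<sigma>' \<inter> {..<u} = \<sigma> \<and> card \<sigma> < card \<sigma>' \<and> R n \<sigma>' u'"
proof -
  obtain a where a: "a \<in> A" "u \<le> a"
    using \<open>infinite A\<close> unfolding infinite_nat_iff_unbounded_le by blast
  have "finite \<sigma>" using \<sigma> finite_subset[of \<sigma> "{..<u}"] by auto
  with a \<sigma> have "finite (insert a \<sigma>)" "insert a \<sigma> \<subseteq> A" "insert a \<sigma> \<subseteq> {..<Suc a}" by auto
  from extend[of "insert a \<sigma>" "Suc a" n, OF this] obtain \<sigma>' u' where \<sigma>': "\<sigma>' \<subseteq> A \<inter> {..<u'}"
    "Suc a \<le> u'" "\<sigma>' \<inter> {..<Suc a} = insert a \<sigma>" "R n \<sigma>' u'"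
    by (elim exE conjE) (rule that)
  have "\<sigma>' \<inter> {..<u} = (\<sigma>' \<inter> {..<Suc a}) \<inter> {..<u}" using a(2) by auto
  also have "\<dots> = \<sigma>" using \<sigma>' a(2) \<sigma> by auto
  finally have "\<sigma>' \<inter> {..<u} = \<sigma>" .
  moreover have "card \<sigma> < card \<sigma>'"
  proof -
    have "a \<notin> \<sigma>" using \<sigma> a(2) by auto
    then have "card \<sigma> < card (insert a \<sigma>)" using \<open>finite \<sigma>\<close> by simp
    also have "\<dots> \<le> card \<sigma>'"
      using \<sigma>'(1,3) by (intro card_mono) (auto intro: finite_subset)
    finally show ?thesis .
  qed
  ultimately show ?thesis using \<sigma>' a(2) by (intro exI[of _ \<sigma>'] exI[of _ u']) simp
qed

lemma infinite_UN_if_card_increasing: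
  assumes "\<And>n. card (\<sigma> n) < card (\<sigma> (Suc n))"
  shows "infinite (\<Union>n. \<sigma> n)"
proof
  assume fin: "finite (\<Union>n. \<sigma> n)"
  have "n \<le> card (\<sigma> n)" for n
    by (induction n) (use assms in \<open>auto intro: Suc_leI le_less_trans\<close>)
  moreover have "card (\<sigma> n) \<le> card (\<Union>n. \<sigma> n)" for n
    using fin by (intro card_mono) auto
  ultimately show False by (metis not_less_eq_eq)
qed

lemma exists_infinite_subset_meeting_requirements:
  fixes A :: "nat set" and R :: "nat \<Rightarrow> nat set \<Rightarrow> nat \<Rightarrow> bool"
  assumes "infinite A"
    and extend: "\<And>n \<sigma> u. finite \<sigma> \<Longrightarrow> \<sigma> \<subseteq> A \<Longrightarrow> \<sigma> \<subseteq> {..<u} \<Longrightarrow>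
      \<exists>\<sigma>' u'. \<sigma>' \<subseteq> A \<inter> {..<u'} \<and> u \<le> u' \<and> \<sigma>' \<inter> {..<u} = \<sigma> \<and> R n \<sigma>' u'"
  shows "\<exists>G\<subseteq>A. infinite G \<and> (\<forall>n. \<exists>u. R n (G \<inter> {..<u}) u)"
proof -
  have "\<exists>s. \<forall>n. fst (s n) \<subseteq> A \<inter> {..<snd (s n)} \<and>
      snd (s n) \<le> snd (s (Suc n)) \<and> fst (s (Suc n)) \<inter> {..<snd (s n)} = fst (s n) \<and>
      card (fst (s n)) < card (fst (s (Suc n))) \<and> R n (fst (s (Suc n))) (snd (s (Suc n)))"
  proof (rule dependent_nat_choice)
    fix s n assume s: "fst s \<subseteq> A \<inter> {..<snd s}"
    have "\<exists>\<sigma>' u'. \<sigma>' \<subseteq> A \<inter> {..<u'} \<and> snd s \<le> u' \<and> \<sigma>' \<inter> {..<snd s} = fst s \<and>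
        card (fst s) < card \<sigma>' \<and> R n \<sigma>' u'"
      by (rule growing_extension[OF assms(1) _ s]) (rule extend)
    then obtain \<sigma>' u' where "\<sigma>' \<subseteq> A \<inter> {..<u'}" "snd s \<le> u'" "\<sigma>' \<inter> {..<snd s} = fst s"
      "card (fst s) < card \<sigma>'" "R n \<sigma>' u'"
      by (elim exE conjE) (rule that)
    then show "\<exists>s'. fst s' \<subseteq> A \<inter> {..<snd s'} \<and> snd s \<le> snd s' \<and> fst s' \<inter> {..<snd s} = fst s \<and>
        card (fst s) < card (fst s') \<and> R n (fst s') (snd s')"
      by (intro exI[of _ "(\<sigma>', u')"]) simp
  qed (rule exI[of _ "({}, 0)"], simp)
  then obtain s where s: "\<And>n. fst (s n) \<subseteq> A \<inter> {..<snd (s n)}"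
    "\<And>n. snd (s n) \<le> snd (s (Suc n))" "\<And>n. fst (s (Suc n)) \<inter> {..<snd (s n)} = fst (s n)"
    "\<And>n. card (fst (s n)) < card (fst (s (Suc n)))" "\<And>n. R n (fst (s (Suc n))) (snd (s (Suc n)))"
    by blast
  let ?G = "\<Union>n. fst (s n)"
  have "?G \<inter> {..<snd (s n)} = fst (s n)" for n
    by (rule UN_chain_Int_lessThan) (use s(1-3) in auto)
  with s(5) have "R n (?G \<inter> {..<snd (s (Suc n))}) (snd (s (Suc n)))" for n by simp
  moreover have "?G \<subseteq> A" using s(1) by blast
  moreover have "infinite ?G" using s(4) by (rule infinite_UN_if_card_increasing)
  ultimately show ?thesis by blast
qed

instance recf :: countable by countable_datatype

theorem proposition3p4:
  fixes C A :: "nat set"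
  assumes "\<not> computable_set C"
    and "infinite A"
    and "hyperimmune (- A)"
  shows "\<exists>G. G \<subseteq> A \<and> infinite G \<and> \<not> turing_reducible C G"
proof -
  have "\<exists>G\<subseteq>A. infinite G \<and> (\<forall>n. \<exists>u. forces_incorrect A C (from_nat n) (G \<inter> {..<u}) u)"
    by (rule exists_infinite_subset_meeting_requirements[OF assms(2),
        where R = "\<lambda>n. forces_incorrect A C (from_nat n)"])
      (rule requirement_extension[OF assms(1,3)])
  then obtain G where "G \<subseteq> A" "infinite G"
    and forced: "\<forall>n. \<exists>u. forces_incorrect A C (from_nat n) (G \<inter> {..<u}) u"
    by (elim exE conjE) (rule that)
  moreover have "\<not> turing_reducible C G"
  proof
    assume "turing_reducible C G"
    then obtain p where p: "\<forall>x. eval G p [x] (of_bool (x \<in> C))"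
      unfolding turing_reducible_def rel_computable_def of_bool_def by blast
    from forced obtain u where "forces_incorrect A C (from_nat (to_nat p)) (G \<inter> {..<u}) u" by blast
    with \<open>G \<subseteq> A\<close> have "\<not> (\<forall>x. eval G p [x] (of_bool (x \<in> C)))"
      unfolding forces_incorrect_def by simp
    with p show False by contradiction
  qed
  ultimately show ?thesis by blast
qed

end
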